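(* Let $R$ be a local ring with Jacobson radical $J(R)$, set $\overline{R}=R/J(R)$, and let $C_n$ be a cyclic group of order $n$ (a positive integer). If the characteristic of $\overline{R}$ is not $2$, then the group ring $RC_n$ is 2-good.
   Context: A ring $S$ (associative with identity) is called $n$-good if every element of $S$ is a sum of $n$ units of $S$. A local ring is a ring $R$ in which $R/J(R)$ is a division ring. *)

theory Defs
  imports Main
begin

definition left_ideal :: "'a::ring_1 set \<Rightarrow> bool" where
  "left_ideal I \<longleftrightarrow> 0 \<in> I \<and> (\<forall>x\<in>I. \<forall>y\<in>I. x + y \<in> I) \<and> (\<forall>x\<in>I. - x \<in> I)
     \<and> (\<forall>r. \<forall>x\<in>I. r * x \<in> I)"

definition maximal_left_ideal :: "'a::ring_1 set \<Rightarrow> bool" where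
  "maximal_left_ideal I \<longleftrightarrow> left_ideal I \<and> I \<noteq> UNIV \<and>
     (\<forall>K. left_ideal K \<and> I \<subseteq> K \<longrightarrow> K = I \<or> K = UNIV)"

definition jacobson :: "'a::ring_1 set" where
  "jacobson = \<Inter>{I. maximal_left_ideal I}"

(* R/J(R) is a division ring, written out on representatives:
   the quotient is nontrivial (1 \<notin> J) and every class x + J with x \<notin> J
   has a two-sided inverse class y + J. *)
definition local_ring :: "'a::ring_1 itself \<Rightarrow> bool" where
  "local_ring _ \<longleftrightarrow> (1::'a) \<notin> jacobson \<and>
     (\<forall>x::'a. x \<notin> jacobson \<longrightarrow> (\<exists>y. x * y - 1 \<in> jacobson \<and> y * x - 1 \<in> jacobson))"

definition char_rad_quot :: "'a::ring_1 itself \<Rightarrow> nat" where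
  "char_rad_quot _ = (if \<exists>m>0. (of_nat m :: 'a) \<in> jacobson
      then (LEAST m. m > 0 \<and> (of_nat m :: 'a) \<in> jacobson) else 0)"

(* Group ring R C_n, C_n = Z/nZ = {0,...,n-1} with addition mod n.
   Elements: functions nat => R vanishing outside {0..<n}. *)
definition gr_carrier :: "nat \<Rightarrow> (nat \<Rightarrow> 'a::ring_1) set" where
  "gr_carrier n = {f. \<forall>k\<ge>n. f k = 0}"

definition gr_one :: "nat \<Rightarrow> nat \<Rightarrow> 'a::ring_1" where
  "gr_one n = (\<lambda>k. if k = 0 then 1 else 0)"

definition gr_mult :: "nat \<Rightarrow> (nat \<Rightarrow> 'a::ring_1) \<Rightarrow> (nat \<Rightarrow> 'a) \<Rightarrow> nat \<Rightarrow> 'a" where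
  "gr_mult n f g = (\<lambda>k. if k < n then (\<Sum>i<n. \<Sum>j<n. if (i + j) mod n = k then f i * g j else 0)
                        else 0)"

definition gr_unit :: "nat \<Rightarrow> (nat \<Rightarrow> 'a::ring_1) \<Rightarrow> bool" where
  "gr_unit n u \<longleftrightarrow> u \<in> gr_carrier n \<and>
     (\<exists>v\<in>gr_carrier n. gr_mult n u v = gr_one n \<and> gr_mult n v u = gr_one n)"

definition gr_good :: "nat \<Rightarrow> 'a::ring_1 itself \<Rightarrow> nat \<Rightarrow> bool" where
  "gr_good n _ m \<longleftrightarrow> (\<forall>x \<in> (gr_carrier n :: (nat \<Rightarrow> 'a) set).
      \<exists>u. (\<forall>i<m. gr_unit n (u i)) \<and> x = (\<lambda>k. \<Sum>i<m. u i k))"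

end

(*
  Let J be the Jacobson radical of R and I the ideal of RC_n of elements with all coefficients
  in J, so that RC_n/I is the group ring of the division ring R/J. For any x, the n+1 powers
  1, x, ..., x^n are left and right dependent over R/J modulo I; normalising a dependence at its
  first invertible coefficient gives x^k = a x^(k+1) and x^k = x^(k+1) b modulo I, i.e. x is
  strongly pi-regular in RC_n/I. Fitting's lemma then yields an idempotent e commuting with x
  such that xe is invertible in eRe and (1 - e)x is nilpotent; with f = 1 - e and 2 invertible,
  x = (xe/2 + f) + (xe/2 - f(1 - fx)) is a sum of two units. Finally every element congruent to
  1 modulo I is invertible in RC_n (by Gaussian elimination over the local ring R), so units of
  RC_n/I lift to units of RC_n.
*)

theory Submission
  imports Defs "HOL-Algebra.QuotRing"
begin

section \<open>The Jacobson radical of a local ring\<close>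

lemma left_ideal_jacobson: "left_ideal (jacobson :: 'a::ring_1 set)"
  by (auto simp: jacobson_def maximal_left_ideal_def left_ideal_def)

lemma jacobson_zero: "0 \<in> (jacobson :: 'a::ring_1 set)"
  using left_ideal_jacobson by (auto simp: left_ideal_def)

lemma jacobson_add: "x \<in> jacobson \<Longrightarrow> y \<in> jacobson \<Longrightarrow> x + y \<in> (jacobson :: 'a::ring_1 set)"
  using left_ideal_jacobson by (auto simp: left_ideal_def)

lemma jacobson_uminus: "x \<in> jacobson \<Longrightarrow> - x \<in> (jacobson :: 'a::ring_1 set)"
  using left_ideal_jacobson by (auto simp: left_ideal_def)

lemma jacobson_mult_left: "x \<in> jacobson \<Longrightarrow> r * x \<in> (jacobson :: 'a::ring_1 set)"
  using left_ideal_jacobson by (auto simp: left_ideal_def)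

lemma jacobson_diff: "x \<in> jacobson \<Longrightarrow> y \<in> jacobson \<Longrightarrow> x - y \<in> (jacobson :: 'a::ring_1 set)"
  using jacobson_add[OF _ jacobson_uminus] by fastforce

lemma jacobson_sum: "(\<And>i. i \<in> A \<Longrightarrow> f i \<in> jacobson) \<Longrightarrow> sum f A \<in> (jacobson :: 'a::ring_1 set)"
  by (induction A rule: infinite_finite_induct) (auto intro: jacobson_zero jacobson_add)

lemma left_ideal_Union_chain:
  assumes "C \<noteq> {}" and "subset.chain {K. left_ideal K} C"
  shows "left_ideal (\<Union>C)"
proof -
  have ideals: "\<And>K. K \<in> C \<Longrightarrow> left_ideal K" and comparable: "\<And>K L. K \<in> C \<Longrightarrow> L \<in> C \<Longrightarrow> K \<subseteq> L \<or> L \<subseteq> K"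
    using assms(2) by (auto simp: subset_chain_def)
  have "x + y \<in> \<Union>C" if xy: "x \<in> \<Union>C" "y \<in> \<Union>C" for x y
  proof -
    obtain K L where "K \<in> C" "L \<in> C" "x \<in> K" "y \<in> L" using xy by blast
    then show ?thesis
      using comparable[of K L] ideals[of K] ideals[of L] unfolding left_ideal_def by blast
  qed
  then show ?thesis
    using assms(1) ideals unfolding left_ideal_def by blast
qed

lemma maximal_left_ideal_exists:
  fixes L :: "'a::ring_1 set"
  assumes "left_ideal L" and "1 \<notin> L"
  obtains M where "maximal_left_ideal M" and "L \<subseteq> M"
proof -
  define A where "A = {K. left_ideal K \<and> L \<subseteq> K \<and> (1::'a) \<notin> K}"
  have "\<exists>M\<in>A. \<forall>K\<in>A. M \<subseteq> K \<longrightarrow> K = M"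
  proof (rule subset_Zorn_nonempty)
    show "A \<noteq> {}" using assms unfolding A_def by blast
    fix C assume "C \<noteq> {}" and chain: "subset.chain A C"
    then have "C \<subseteq> A" and "left_ideal (\<Union>C)"
      by (auto simp: subset_chain_def A_def intro!: left_ideal_Union_chain)
    then show "\<Union>C \<in> A"
      using \<open>C \<noteq> {}\<close> unfolding A_def by blast
  qed
  then obtain M where M: "M \<in> A" and max: "\<And>K. K \<in> A \<Longrightarrow> M \<subseteq> K \<Longrightarrow> K = M" by blast
  have "K = M \<or> K = UNIV" if K: "left_ideal K" "M \<subseteq> K" for K
  proof (cases "1 \<in> K")
    case True
    then have "r * 1 \<in> K" for r using K(1) unfolding left_ideal_def by blast
    then show ?thesis by auto
  next
    case False
    then have "K \<in> A" using K M unfolding A_def by blast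
    then show ?thesis using max K(2) by simp
  qed
  moreover have "left_ideal M" "M \<noteq> UNIV" "L \<subseteq> M" using M unfolding A_def by auto
  ultimately have "maximal_left_ideal M" unfolding maximal_left_ideal_def by blast
  then show thesis using that \<open>L \<subseteq> M\<close> by blast
qed

lemma jacobson_one_minus_left_invertible:
  fixes j :: "'a::ring_1"
  assumes "j \<in> jacobson"
  shows "\<exists>b. b * (1 - j) = 1"
proof (rule ccontr)
  assume no_inverse: "\<nexists>b. b * (1 - j) = 1"
  let ?L = "range (\<lambda>r. r * (1 - j))"
  have "left_ideal ?L"
    unfolding left_ideal_def
  proof (intro conjI ballI allI)
    show "0 \<in> ?L" by (rule image_eqI[of _ _ 0]) auto
    fix x y assume "x \<in> ?L" "y \<in> ?L"
    then obtain r s where "x = r * (1 - j)" "y = s * (1 - j)" by blast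
    then show "x + y \<in> ?L" and "- x \<in> ?L" and "t * x \<in> ?L" for t
      by (auto simp: distrib_right mult.assoc intro: range_eqI[of _ _ "r + s"] range_eqI[of _ _ "- r"] range_eqI[of _ _ "t * r"])
  qed
  moreover have "1 \<notin> ?L" using no_inverse by auto
  ultimately obtain M where M: "maximal_left_ideal M" "?L \<subseteq> M"
    by (rule maximal_left_ideal_exists)
  then have ideal: "left_ideal M" and proper: "M \<noteq> UNIV"
    by (simp_all add: maximal_left_ideal_def)
  have "j \<in> M" using assms M(1) unfolding jacobson_def by blast
  moreover have "1 - j \<in> M" using M(2) rangeI[of "\<lambda>r. r * (1 - j)" 1] by auto
  ultimately have "(1 - j) + j \<in> M" using ideal unfolding left_ideal_def by blast
  then have "1 \<in> M" by simp
  then have "r * 1 \<in> M" for r using ideal unfolding left_ideal_def by blast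
  then show False using proper by auto
qed

lemma jacobson_one_minus_invertible:
  fixes j :: "'a::ring_1"
  assumes "j \<in> jacobson"
  obtains u where "u * (1 - j) = 1" and "(1 - j) * u = 1"
proof -
  obtain a where a: "a * (1 - j) = 1" using jacobson_one_minus_left_invertible[OF assms] by blast
  have "a = 1 - (- (a * j))" using a by (simp add: algebra_simps)
  moreover have "- (a * j) \<in> jacobson" using assms by (intro jacobson_uminus jacobson_mult_left)
  ultimately obtain b where b: "b * a = 1" using jacobson_one_minus_left_invertible by metis
  have "b = b * (a * (1 - j))" using a by simp
  also have "\<dots> = 1 - j" using b by (simp add: mult.assoc[symmetric])
  finally show thesis using that a b by blast
qed

lemma local_ring_one_notin_jacobson: "local_ring TYPE('a::ring_1) \<Longrightarrow> (1::'a) \<notin> jacobson"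
  by (simp add: local_ring_def)

lemma local_ring_invertible:
  fixes x :: "'a::ring_1"
  assumes "local_ring TYPE('a)" and "x \<notin> jacobson"
  obtains y where "x * y = 1" and "y * x = 1"
proof -
  obtain y where "x * y - 1 \<in> jacobson" "y * x - 1 \<in> jacobson"
    using assms unfolding local_ring_def by blast
  then have "- (x * y - 1) \<in> jacobson" "- (y * x - 1) \<in> jacobson"
    using jacobson_uminus by blast+
  then obtain u v where u: "(1 - - (x * y - 1)) * u = 1" and v: "v * (1 - - (y * x - 1)) = 1"
    by (metis jacobson_one_minus_invertible)
  have r: "x * (y * u) = 1" using u by (simp add: mult.assoc)
  have l: "(v * y) * x = 1" using v by (simp add: mult.assoc)
  have "v * y = v * y * (x * (y * u))" using r by simp
  also have "\<dots> = y * u" using l by (simp add: mult.assoc[symmetric])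
  finally show thesis using that r l by metis
qed

lemma local_ring_jacobson_mult_right:
  fixes j :: "'a::ring_1"
  assumes local: "local_ring TYPE('a)" and j: "j \<in> jacobson"
  shows "j * r \<in> jacobson"
proof (rule ccontr)
  assume "j * r \<notin> jacobson"
  then obtain u where "j * r * u = 1" using local_ring_invertible[OF local] by metis
  then have ja: "j * (r * u) = 1" by (simp add: mult.assoc)
  define a where "a = r * u"
  obtain b where b: "b * (1 - a * j) = 1"
    using jacobson_one_minus_invertible[OF jacobson_mult_left[OF j]] by metis
  have "(a * j) * (a * j) = a * j" by (metis a_def ja mult.assoc mult_1)
  then have "(1 - a * j) * (a * j) = 0" by (simp add: left_diff_distrib)
  then have "a * j = 0" using b by (metis mult.assoc mult_1 mult_zero_right)
  then have "j = 0" using ja by (metis a_def mult.assoc mult_1 mult_zero_right)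
  then show False using ja by simp
qed

lemma local_ring_two_notin_jacobson:
  assumes local: "local_ring TYPE('a::ring_1)" and char: "char_rad_quot TYPE('a) \<noteq> 2"
  shows "(2::'a) \<notin> jacobson"
proof
  assume two: "(2::'a) \<in> jacobson"
  have "(LEAST m::nat. m > 0 \<and> (of_nat m :: 'a) \<in> jacobson) = 2"
  proof (rule Least_equality)
    show "(2::nat) > 0 \<and> (of_nat 2 :: 'a) \<in> jacobson" using two by simp
    show "2 \<le> m" if "m > 0 \<and> (of_nat m :: 'a) \<in> jacobson" for m
      using that local_ring_one_notin_jacobson[OF local] by (cases "m = 1") auto
  qed
  then have "char_rad_quot TYPE('a) = 2"
    using two unfolding char_rad_quot_def by (metis of_nat_numeral zero_less_numeral)
  then show False using char by simp
qed

section \<open>Linear dependence modulo the radical\<close>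

lemma left_dependent_mod_jacobson:
  fixes v :: "'b \<Rightarrow> nat \<Rightarrow> 'a::ring_1"
  assumes local: "local_ring TYPE('a)"
    and "finite K" and "m < card K" and "\<forall>k\<in>K. \<forall>l\<ge>m. v k l \<in> jacobson"
  shows "\<exists>c. (\<exists>k\<in>K. c k \<notin> jacobson) \<and> (\<forall>l. (\<Sum>k\<in>K. c k * v k l) \<in> jacobson)"
  using assms(2-)
proof (induction m arbitrary: K v)
  case 0
  then have "K \<noteq> {}" by auto
  then show ?case
    using 0 local_ring_one_notin_jacobson[OF local] by (intro exI[of _ "\<lambda>_. 1"]) (auto intro!: jacobson_sum)
next
  case (Suc m)
  show ?case
  proof (cases "\<forall>k\<in>K. v k m \<in> jacobson")
    case True
    then show ?thesis using Suc.IH[of K v] Suc.prems by (metis Suc_le_eq Suc_lessD le_eq_less_or_eq)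
  next
    case False
    then obtain p where p: "p \<in> K" "v p m \<notin> jacobson" by blast
    obtain u where u: "v p m * u = 1" "u * v p m = 1" by (rule local_ring_invertible[OF local p(2)])
    \<comment> \<open>Eliminate the \<open>m\<close>-th coordinate using the pivot \<open>p\<close>.\<close>
    define w where "w = (\<lambda>k l. v k l - v k m * u * v p l)"
    have "w k l \<in> jacobson" if "k \<in> K - {p}" "m \<le> l" for k l
    proof (cases "l = m")
      case False
      then have "v k l \<in> jacobson" "v p l \<in> jacobson" using Suc.prems(3) that p by auto
      then show ?thesis unfolding w_def by (intro jacobson_diff jacobson_mult_left)
    qed (use u jacobson_zero in \<open>simp add: w_def mult.assoc\<close>)
    moreover have "m < card (K - {p})" using Suc.prems(1,2) p by simp
    ultimately obtain c where c: "\<exists>k\<in>K - {p}. c k \<notin> jacobson" "\<forall>l. (\<Sum>k\<in>K - {p}. c k * w k l) \<in> jacobson"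
      using Suc.IH[of "K - {p}" w] Suc.prems(1) by auto
    define c' where "c' = c(p := - (\<Sum>k\<in>K - {p}. c k * v k m * u))"
    have "(\<Sum>k\<in>K. c' k * v k l) = (\<Sum>k\<in>K - {p}. c k * w k l)" for l
    proof -
      have "(\<Sum>k\<in>K. c' k * v k l) = c' p * v p l + (\<Sum>k\<in>K - {p}. c k * v k l)"
        using Suc.prems(1) p by (auto simp: c'_def sum.remove intro!: sum.cong)
      also have "\<dots> = (\<Sum>k\<in>K - {p}. c k * w k l)"
        by (simp add: c'_def w_def sum_distrib_right right_diff_distrib sum_subtractf mult.assoc)
      finally show ?thesis .
    qed
    then show ?thesis using c by (intro exI[of _ c']) (auto simp: c'_def)
  qed
qed

lemma right_dependent_mod_jacobson:
  fixes v :: "'b \<Rightarrow> nat \<Rightarrow> 'a::ring_1"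
  assumes local: "local_ring TYPE('a)"
    and "finite K" and "m < card K" and "\<forall>k\<in>K. \<forall>l\<ge>m. v k l \<in> jacobson"
  shows "\<exists>c. (\<exists>k\<in>K. c k \<notin> jacobson) \<and> (\<forall>l. (\<Sum>k\<in>K. v k l * c k) \<in> jacobson)"
  using assms(2-)
proof (induction m arbitrary: K v)
  case 0
  then have "K \<noteq> {}" by auto
  then show ?case
    using 0 local_ring_one_notin_jacobson[OF local] by (intro exI[of _ "\<lambda>_. 1"]) (auto intro!: jacobson_sum)
next
  case (Suc m)
  show ?case
  proof (cases "\<forall>k\<in>K. v k m \<in> jacobson")
    case True
    then show ?thesis using Suc.IH[of K v] Suc.prems by (metis Suc_le_eq Suc_lessD le_eq_less_or_eq)
  next
    case False
    then obtain p where p: "p \<in> K" "v p m \<notin> jacobson" by blast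
    obtain u where u: "v p m * u = 1" "u * v p m = 1" by (rule local_ring_invertible[OF local p(2)])
    define w where "w = (\<lambda>k l. v k l - v p l * u * v k m)"
    have "w k l \<in> jacobson" if "k \<in> K - {p}" "m \<le> l" for k l
    proof (cases "l = m")
      case False
      then have "v k l \<in> jacobson" "v p l \<in> jacobson" using Suc.prems(3) that p by auto
      then show ?thesis unfolding w_def by (intro jacobson_diff local_ring_jacobson_mult_right[OF local])
    qed (use u jacobson_zero in \<open>simp add: w_def\<close>)
    moreover have "m < card (K - {p})" using Suc.prems(1,2) p by simp
    ultimately obtain c where c: "\<exists>k\<in>K - {p}. c k \<notin> jacobson" "\<forall>l. (\<Sum>k\<in>K - {p}. w k l * c k) \<in> jacobson"
      using Suc.IH[of "K - {p}" w] Suc.prems(1) by auto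
    define c' where "c' = c(p := - (\<Sum>k\<in>K - {p}. u * v k m * c k))"
    have "(\<Sum>k\<in>K. v k l * c' k) = (\<Sum>k\<in>K - {p}. w k l * c k)" for l
    proof -
      have "(\<Sum>k\<in>K. v k l * c' k) = v p l * c' p + (\<Sum>k\<in>K - {p}. v k l * c k)"
        using Suc.prems(1) p by (auto simp: c'_def sum.remove intro!: sum.cong)
      also have "\<dots> = (\<Sum>k\<in>K - {p}. w k l * c k)"
        by (simp add: c'_def w_def sum_distrib_left left_diff_distrib sum_subtractf mult.assoc)
      finally show ?thesis .
    qed
    then show ?thesis using c by (intro exI[of _ c']) (auto simp: c'_def)
  qed
qed

section \<open>Strongly pi-regular elements are sums of two units\<close>

lemma (in ring) add_Units_of_orthogonal:
  assumes [simp]: "u \<in> carrier R" "v \<in> carrier R" "p \<in> carrier R" "q \<in> carrier R"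
    and "u \<otimes> v \<oplus> p \<otimes> q = \<one>" and "v \<otimes> u \<oplus> q \<otimes> p = \<one>"
    and "u \<otimes> q = \<zero>" and "p \<otimes> v = \<zero>" and "v \<otimes> p = \<zero>" and "q \<otimes> u = \<zero>"
  shows "u \<oplus> p \<in> Units R"
proof -
  have "(u \<oplus> p) \<otimes> (v \<oplus> q) = \<one>" and "(v \<oplus> q) \<otimes> (u \<oplus> p) = \<one>"
    using assms(5-) by (simp_all add: l_distr r_distr)
  then show ?thesis unfolding Units_def by (auto intro!: bexI[of _ "v \<oplus> q"])
qed

lemma (in ring) one_minus_pow_factor:
  assumes "z \<in> carrier R"
  shows "\<exists>s\<in>carrier R. (\<one> \<ominus> z) \<otimes> s = \<one> \<ominus> z [^] (m::nat) \<and> s \<otimes> (\<one> \<ominus> z) = \<one> \<ominus> z [^] m"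
proof (induction m)
  case 0
  show ?case by (intro bexI[of _ \<zero>]) (simp_all add: assms r_neg minus_eq)
next
  case (Suc m)
  then obtain s where s: "s \<in> carrier R" "(\<one> \<ominus> z) \<otimes> s = \<one> \<ominus> z [^] m" "s \<otimes> (\<one> \<ominus> z) = \<one> \<ominus> z [^] m"
    by blast
  have comm: "(\<one> \<ominus> z) \<otimes> z = z \<otimes> (\<one> \<ominus> z)" using assms by (simp add: minus_eq l_distr r_distr l_minus r_minus)
  have "(\<one> \<ominus> z) \<otimes> (\<one> \<oplus> z \<otimes> s) = (\<one> \<ominus> z) \<oplus> z \<otimes> ((\<one> \<ominus> z) \<otimes> s)"
    using assms s(1) by (simp add: r_distr comm m_assoc[symmetric])
  moreover have "(\<one> \<oplus> z \<otimes> s) \<otimes> (\<one> \<ominus> z) = (\<one> \<ominus> z) \<oplus> z \<otimes> (s \<otimes> (\<one> \<ominus> z))"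
    using assms s(1) by (simp add: l_distr m_assoc)
  moreover have "(\<one> \<ominus> z) \<oplus> z \<otimes> (\<one> \<ominus> z [^] m) = \<one> \<oplus> (\<ominus> z \<oplus> z) \<oplus> \<ominus> (z \<otimes> z [^] m)"
    using assms by (simp add: minus_eq r_distr r_minus a_assoc)
  moreover have "\<dots> = \<one> \<ominus> z [^] Suc m"
    using assms nat_pow_Suc2[OF assms, of m] by (simp add: l_neg minus_eq)
  ultimately show ?case using assms s by (intro bexI[of _ "\<one> \<oplus> z \<otimes> s"]) simp_all
qed

lemma (in ring) one_minus_nilpotent_Units:
  assumes "z \<in> carrier R" and "z [^] (m::nat) = \<zero>"
  shows "\<one> \<ominus> z \<in> Units R"
  using one_minus_pow_factor[OF assms(1), of m] assms unfolding Units_def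
  by (auto simp: minus_eq r_zero)

lemma (in monoid) Units_inv_central:
  assumes "u \<in> Units G" and central: "\<And>y. y \<in> carrier G \<Longrightarrow> u \<otimes> y = y \<otimes> u" and "y \<in> carrier G"
  shows "inv u \<otimes> y = y \<otimes> inv u"
proof -
  have [simp]: "u \<in> carrier G" "inv u \<in> carrier G" using assms(1) by auto
  have "inv u \<otimes> y = inv u \<otimes> (y \<otimes> u) \<otimes> inv u" using assms by (simp add: m_assoc)
  also have "\<dots> = y \<otimes> inv u" using assms by (simp add: central[symmetric] m_assoc[symmetric])
  finally show ?thesis .
qed

lemma (in monoid) nat_pow_left_regular_add:
  assumes "x \<in> carrier G" "a \<in> carrier G" and "x [^] j = a \<otimes> x [^] Suc j"
  shows "x [^] (j + i) = a \<otimes> x [^] Suc (j + i)"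
proof -
  have "x [^] (j + i) = x [^] j \<otimes> x [^] i" using assms(1) by (simp only: nat_pow_mult)
  also have "\<dots> = (a \<otimes> x [^] Suc j) \<otimes> x [^] i" by (simp only: assms(3))
  also have "\<dots> = a \<otimes> (x [^] Suc j \<otimes> x [^] i)" by (intro m_assoc) (simp_all add: assms(1,2))
  also have "\<dots> = a \<otimes> x [^] Suc (j + i)" using assms(1) by (simp only: nat_pow_mult add_Suc)
  finally show ?thesis .
qed

lemma (in monoid) nat_pow_right_regular_add:
  assumes "x \<in> carrier G" "b \<in> carrier G" and "x [^] j = x [^] Suc j \<otimes> b"
  shows "x [^] (i + j) = x [^] Suc (i + j) \<otimes> b"
proof -
  have "x [^] (i + j) = x [^] i \<otimes> x [^] j" using assms(1) by (simp only: nat_pow_mult)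
  also have "\<dots> = x [^] i \<otimes> (x [^] Suc j \<otimes> b)" by (simp only: assms(3))
  also have "\<dots> = (x [^] i \<otimes> x [^] Suc j) \<otimes> b" by (intro m_assoc[symmetric]) (simp_all add: assms(1,2))
  also have "\<dots> = x [^] Suc (i + j) \<otimes> b" using assms(1) by (simp only: nat_pow_mult add_Suc_right)
  finally show ?thesis .
qed

locale fitting_decomposition = ring +
  fixes x a b :: 'a and k :: nat
  assumes elements_closed [simp]: "x \<in> carrier R" "a \<in> carrier R" "b \<in> carrier R"
    and left_regular: "x [^] k = a \<otimes> x [^] Suc k"
    and right_regular: "x [^] k = x [^] Suc k \<otimes> b"
begin

lemma left_regular_iter: "x [^] k = a [^] m \<otimes> x [^] (k + m)"
proof (induction m)
  case (Suc m)
  have "a [^] Suc m \<otimes> x [^] (k + Suc m) = (a [^] m \<otimes> a) \<otimes> (x [^] Suc k \<otimes> x [^] m)"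
    by (simp only: nat_pow_Suc[of a] nat_pow_mult[OF elements_closed(1)]) simp
  also have "\<dots> = a [^] m \<otimes> ((a \<otimes> x [^] Suc k) \<otimes> x [^] m)" by (simp add: m_assoc)
  also have "\<dots> = a [^] m \<otimes> x [^] (k + m)"
    by (simp only: left_regular[symmetric] nat_pow_mult[OF elements_closed(1)])
  finally show ?case using Suc by simp
qed simp

lemma right_regular_iter: "x [^] k = x [^] (k + m) \<otimes> b [^] m"
proof (induction m)
  case (Suc m)
  have "x [^] (k + Suc m) \<otimes> b [^] Suc m = (x [^] m \<otimes> x [^] Suc k) \<otimes> (b \<otimes> b [^] m)"
    by (simp only: nat_pow_Suc2[OF elements_closed(3), symmetric] nat_pow_mult[OF elements_closed(1)])
      (simp add: add.commute)
  also have "\<dots> = x [^] m \<otimes> ((x [^] Suc k \<otimes> b) \<otimes> b [^] m)" by (simp add: m_assoc)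
  also have "\<dots> = x [^] (k + m) \<otimes> b [^] m"
    by (simp only: right_regular[symmetric] m_assoc[symmetric] nat_pow_closed elements_closed
        nat_pow_mult[OF elements_closed(1)] add.commute)
  finally show ?case using Suc by simp
qed simp

text \<open>Fitting decomposition: \<open>idem\<close> is an idempotent commuting with \<open>x\<close>, \<open>x\<close> is invertible in
  the corner ring \<open>idem R idem\<close> with inverse \<open>core_inv\<close>, and \<open>nil_part = (1 - idem) x\<close> is nilpotent.\<close>

definition idem where "idem = a [^] k \<otimes> x [^] k"
definition coidem where "coidem = \<one> \<ominus> idem"
definition core_inv where "core_inv = idem \<otimes> (x [^] k \<otimes> b [^] Suc k)"
definition nil_part where "nil_part = coidem \<otimes> x"

lemma idem_closed [simp]: "idem \<in> carrier R" by (simp add: idem_def)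
lemma coidem_closed [simp]: "coidem \<in> carrier R" by (simp add: coidem_def)
lemma core_inv_closed [simp]: "core_inv \<in> carrier R" by (simp add: core_inv_def)
lemma nil_part_closed [simp]: "nil_part \<in> carrier R" by (simp add: nil_part_def)

lemma a_pow_x_pow_double: "a [^] k \<otimes> x [^] (k + k) = x [^] k"
  using left_regular_iter[of k] by simp

lemma x_pow_double_b_pow: "x [^] (k + k) \<otimes> b [^] k = x [^] k"
  using right_regular_iter[of k] by simp

lemma idem_eq: "idem = x [^] k \<otimes> b [^] k"
proof -
  have "idem = a [^] k \<otimes> (x [^] (k + k) \<otimes> b [^] k)" by (simp only: idem_def x_pow_double_b_pow)
  also have "\<dots> = (a [^] k \<otimes> x [^] (k + k)) \<otimes> b [^] k" by (simp add: m_assoc)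
  finally show ?thesis by (simp only: a_pow_x_pow_double)
qed

lemma idem_idem: "idem \<otimes> idem = idem"
proof -
  have "idem \<otimes> idem = (a [^] k \<otimes> x [^] k) \<otimes> (x [^] k \<otimes> b [^] k)"
    by (simp only: idem_def[symmetric] idem_eq[symmetric])
  also have "\<dots> = a [^] k \<otimes> ((x [^] k \<otimes> x [^] k) \<otimes> b [^] k)" by (simp add: m_assoc)
  also have "\<dots> = a [^] k \<otimes> x [^] k" by (simp only: nat_pow_mult[OF elements_closed(1)] x_pow_double_b_pow)
  finally show ?thesis by (simp only: idem_def)
qed

lemma idem_x_pow: "idem \<otimes> x [^] k = x [^] k"
proof -
  have "idem \<otimes> x [^] k = a [^] k \<otimes> (x [^] k \<otimes> x [^] k)" by (simp add: idem_def m_assoc)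
  also have "\<dots> = x [^] k" by (simp only: nat_pow_mult[OF elements_closed(1)] a_pow_x_pow_double)
  finally show ?thesis .
qed

lemma idem_comm: "idem \<otimes> x = x \<otimes> idem"
proof -
  have l: "idem \<otimes> x = a [^] k \<otimes> x [^] Suc k" by (simp add: idem_def m_assoc)
  have r: "x \<otimes> idem = x [^] Suc k \<otimes> b [^] k"
    by (simp add: idem_eq m_assoc[symmetric] nat_pow_Suc2[OF elements_closed(1), symmetric] del: nat_pow_Suc)
  have "x [^] Suc k = x \<otimes> (x [^] (k + k) \<otimes> b [^] k)"
    by (simp only: x_pow_double_b_pow nat_pow_Suc2[OF elements_closed(1)])
  also have "\<dots> = (x [^] (k + k) \<otimes> x) \<otimes> b [^] k"
    by (simp add: m_assoc[symmetric] nat_pow_Suc2[OF elements_closed(1), symmetric] del: nat_pow_Suc)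
  finally have x_pow_Suc: "x [^] Suc k = (x [^] (k + k) \<otimes> x) \<otimes> b [^] k" .
  have "a [^] k \<otimes> x [^] Suc k = ((a [^] k \<otimes> x [^] (k + k)) \<otimes> x) \<otimes> b [^] k"
    by (simp only: x_pow_Suc) (simp add: m_assoc)
  also have "\<dots> = x [^] Suc k \<otimes> b [^] k" by (simp only: a_pow_x_pow_double nat_pow_Suc)
  finally show ?thesis using l r by simp
qed

lemma left_core_inv: "(a [^] Suc k \<otimes> x [^] k) \<otimes> x = idem"
proof -
  have "(a [^] Suc k \<otimes> x [^] k) \<otimes> x = a [^] k \<otimes> (a \<otimes> x [^] Suc k)" by (simp add: m_assoc)
  then show ?thesis by (simp only: left_regular[symmetric] idem_def)
qed

lemma right_core_inv: "x \<otimes> (x [^] k \<otimes> b [^] Suc k) = idem"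
proof -
  have "x \<otimes> (x [^] k \<otimes> b [^] Suc k) = ((x \<otimes> x [^] k) \<otimes> b) \<otimes> b [^] k"
    by (simp only: nat_pow_Suc2[OF elements_closed(3)]) (simp add: m_assoc)
  also have "\<dots> = (x [^] Suc k \<otimes> b) \<otimes> b [^] k" by (simp only: nat_pow_Suc2[OF elements_closed(1), symmetric])
  finally show ?thesis by (simp only: right_regular[symmetric] idem_eq)
qed

lemma core_inv_eq: "core_inv = (a [^] Suc k \<otimes> x [^] k) \<otimes> idem"
proof -
  have "(a [^] Suc k \<otimes> x [^] k) \<otimes> idem = (a [^] Suc k \<otimes> x [^] k) \<otimes> (x \<otimes> (x [^] k \<otimes> b [^] Suc k))"
    by (simp only: right_core_inv)
  also have "\<dots> = ((a [^] Suc k \<otimes> x [^] k) \<otimes> x) \<otimes> (x [^] k \<otimes> b [^] Suc k)" by (simp add: m_assoc)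
  finally show ?thesis by (simp only: left_core_inv core_inv_def)
qed

lemma core_inv_x: "core_inv \<otimes> x = idem"
proof -
  have "core_inv \<otimes> x = (a [^] Suc k \<otimes> x [^] k) \<otimes> (idem \<otimes> x)" by (simp add: core_inv_eq m_assoc)
  also have "\<dots> = ((a [^] Suc k \<otimes> x [^] k) \<otimes> x) \<otimes> idem" by (simp add: idem_comm m_assoc)
  finally show ?thesis by (simp only: left_core_inv idem_idem)
qed

lemma x_core_inv: "x \<otimes> core_inv = idem"
proof -
  have "x \<otimes> core_inv = (x \<otimes> idem) \<otimes> (x [^] k \<otimes> b [^] Suc k)" by (simp add: core_inv_def m_assoc)
  also have "\<dots> = idem \<otimes> (x \<otimes> (x [^] k \<otimes> b [^] Suc k))" by (simp add: idem_comm[symmetric] m_assoc)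
  finally show ?thesis by (simp only: right_core_inv idem_idem)
qed

lemma core_inv_idem: "core_inv \<otimes> idem = core_inv"
  by (simp add: core_inv_eq m_assoc idem_idem)

lemma idem_core_inv: "idem \<otimes> core_inv = core_inv"
  by (simp add: core_inv_def m_assoc[symmetric] idem_idem)

lemma idem_coidem: "idem \<otimes> coidem = \<zero>"
  by (simp add: coidem_def idem_idem r_distr minus_eq r_minus r_neg)

lemma coidem_idem: "coidem \<otimes> idem = \<zero>"
  by (simp add: coidem_def idem_idem l_distr minus_eq l_minus r_neg)

lemma coidem_coidem: "coidem \<otimes> coidem = coidem"
  by (subst (1) coidem_def) (simp add: minus_eq l_distr l_minus idem_coidem)

lemma coidem_comm: "coidem \<otimes> x = x \<otimes> coidem"
  by (simp add: coidem_def l_distr r_distr minus_eq l_minus r_minus idem_comm)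

lemma idem_add_coidem: "idem \<oplus> coidem = \<one>"
proof -
  have "idem \<oplus> coidem = (idem \<oplus> \<ominus> idem) \<oplus> \<one>" unfolding coidem_def by (simp add: minus_eq a_ac)
  then show ?thesis by (simp add: r_neg)
qed

lemma core_inv_coidem: "core_inv \<otimes> coidem = \<zero>"
  by (subst core_inv_idem[symmetric]) (simp add: m_assoc idem_coidem)

lemma coidem_core_inv: "coidem \<otimes> core_inv = \<zero>"
  by (subst idem_core_inv[symmetric]) (simp add: m_assoc[symmetric] coidem_idem)

lemma coidem_x_pow: "coidem \<otimes> x [^] k = \<zero>"
  by (simp add: coidem_def l_distr minus_eq l_minus idem_x_pow r_neg)

lemma x_pow_coidem: "x [^] (m::nat) \<otimes> coidem = coidem \<otimes> x [^] m"
proof (induction m)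
  case (Suc m)
  have "x [^] Suc m \<otimes> coidem = x [^] m \<otimes> (x \<otimes> coidem)" by (simp add: m_assoc)
  also have "\<dots> = (x [^] m \<otimes> coidem) \<otimes> x" by (simp add: coidem_comm[symmetric] m_assoc)
  also have "\<dots> = coidem \<otimes> x [^] Suc m" by (simp add: Suc m_assoc)
  finally show ?case .
qed simp

lemma nil_part_pow: "nil_part [^] Suc m = coidem \<otimes> x [^] Suc m"
proof (induction m)
  case 0 then show ?case by (simp add: nil_part_def)
next
  case (Suc m)
  have "nil_part [^] Suc (Suc m) = (coidem \<otimes> x [^] Suc m) \<otimes> (coidem \<otimes> x)"
    by (simp only: nat_pow_Suc[of nil_part "Suc m"] Suc) (simp only: nil_part_def)
  also have "\<dots> = coidem \<otimes> ((x [^] Suc m \<otimes> coidem) \<otimes> x)" by (simp add: m_assoc del: nat_pow_Suc)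
  also have "\<dots> = (coidem \<otimes> coidem) \<otimes> (x [^] Suc m \<otimes> x)"
    by (simp only: x_pow_coidem) (simp add: m_assoc del: nat_pow_Suc)
  also have "\<dots> = coidem \<otimes> x [^] Suc (Suc m)" by (simp only: coidem_coidem nat_pow_Suc[of x "Suc m"])
  finally show ?case .
qed

lemma nil_part_nilpotent: "nil_part [^] Suc k = \<zero>"
proof -
  have "nil_part [^] Suc k = (coidem \<otimes> x [^] k) \<otimes> x"
    by (simp only: nil_part_pow nat_pow_Suc[of x k]) (simp add: m_assoc)
  then show ?thesis by (simp add: coidem_x_pow)
qed

lemma coidem_nil_part: "coidem \<otimes> nil_part = nil_part"
  by (simp add: nil_part_def m_assoc[symmetric] coidem_coidem)

lemma nil_part_coidem: "nil_part \<otimes> coidem = nil_part"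
  by (simp add: nil_part_def m_assoc coidem_comm[symmetric]) (simp add: m_assoc[symmetric] coidem_coidem)

lemma nil_part_idem: "nil_part \<otimes> idem = \<zero>"
  by (simp add: nil_part_def m_assoc idem_comm[symmetric]) (simp add: m_assoc[symmetric] coidem_idem)

lemma nil_part_core_inv: "nil_part \<otimes> core_inv = \<zero>"
  by (simp add: nil_part_def m_assoc x_core_inv coidem_idem)

lemma decomposition: "x = x \<otimes> idem \<oplus> nil_part"
  by (simp add: nil_part_def coidem_comm r_distr[symmetric] idem_add_coidem)

lemma one_minus_nil_part_Units: "\<one> \<ominus> nil_part \<in> Units R"
  using one_minus_nilpotent_Units[OF nil_part_closed nil_part_nilpotent] .

definition nil_inv where "nil_inv = inv (\<one> \<ominus> nil_part)"

lemma nil_inv_closed [simp]: "nil_inv \<in> carrier R"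
  using one_minus_nil_part_Units by (simp add: nil_inv_def)

lemma nil_inv_left: "nil_inv \<otimes> (\<one> \<ominus> nil_part) = \<one>"
  using one_minus_nil_part_Units by (simp add: nil_inv_def)

lemma nil_inv_right: "(\<one> \<ominus> nil_part) \<otimes> nil_inv = \<one>"
  using one_minus_nil_part_Units by (simp add: nil_inv_def)

lemma coidem_one_minus_nil_part: "coidem \<otimes> (\<one> \<ominus> nil_part) = coidem \<ominus> nil_part"
  by (simp add: minus_eq r_distr r_minus coidem_nil_part)

lemma one_minus_nil_part_coidem: "(\<one> \<ominus> nil_part) \<otimes> coidem = coidem \<ominus> nil_part"
  by (simp add: minus_eq l_distr l_minus nil_part_coidem)

lemma nil_inv_coidem: "nil_inv \<otimes> coidem = coidem \<otimes> nil_inv"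
proof -
  have "nil_inv \<otimes> coidem = nil_inv \<otimes> (coidem \<otimes> ((\<one> \<ominus> nil_part) \<otimes> nil_inv))"
    by (simp add: nil_inv_right)
  also have "\<dots> = nil_inv \<otimes> ((\<one> \<ominus> nil_part) \<otimes> coidem) \<otimes> nil_inv"
    by (simp add: coidem_one_minus_nil_part[symmetric] one_minus_nil_part_coidem m_assoc)
  also have "\<dots> = coidem \<otimes> nil_inv" by (simp add: m_assoc[symmetric] nil_inv_left)
  finally show ?thesis .
qed

lemma nil_inv_idem: "nil_inv \<otimes> idem = idem"
proof -
  have "(\<one> \<ominus> nil_part) \<otimes> idem = idem" by (simp add: minus_eq l_distr l_minus nil_part_idem)
  then have "nil_inv \<otimes> idem = nil_inv \<otimes> ((\<one> \<ominus> nil_part) \<otimes> idem)" by simp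
  also have "\<dots> = idem" by (simp add: m_assoc[symmetric] nil_inv_left)
  finally show ?thesis .
qed

end

locale fitting_decomposition_two_invertible = fitting_decomposition +
  assumes two_Units: "\<one> \<oplus> \<one> \<in> Units R"
begin

definition half where "half = inv (\<one> \<oplus> \<one>)"

lemma half_closed [simp]: "half \<in> carrier R"
  using two_Units by (simp add: half_def)

lemma half_central: "y \<in> carrier R \<Longrightarrow> half \<otimes> y = y \<otimes> half"
  unfolding half_def by (rule Units_inv_central[OF two_Units]) (simp_all add: l_distr r_distr)

lemma half_add_half: "y \<in> carrier R \<Longrightarrow> half \<otimes> y \<oplus> half \<otimes> y = y"
proof -
  assume "y \<in> carrier R"
  then have "half \<otimes> y \<oplus> half \<otimes> y = (half \<otimes> (\<one> \<oplus> \<one>)) \<otimes> y" by (simp add: r_distr l_distr)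
  then show ?thesis using two_Units \<open>y \<in> carrier R\<close> by (simp add: half_def)
qed

definition unit_half where "unit_half = half \<otimes> (x \<otimes> idem)"
definition unit_half_inv where "unit_half_inv = core_inv \<oplus> core_inv"

lemma unit_half_closed [simp]: "unit_half \<in> carrier R" by (simp add: unit_half_def)
lemma unit_half_inv_closed [simp]: "unit_half_inv \<in> carrier R" by (simp add: unit_half_inv_def)

lemma half_left_commute: "y \<in> carrier R \<Longrightarrow> z \<in> carrier R \<Longrightarrow> y \<otimes> (half \<otimes> z) = half \<otimes> (y \<otimes> z)"
  by (metis half_central half_closed m_assoc)

lemma unit_half_unit_half_inv: "unit_half \<otimes> unit_half_inv = idem"
proof -
  have "unit_half \<otimes> core_inv = half \<otimes> idem"
    by (simp add: unit_half_def m_assoc idem_core_inv x_core_inv)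
  then show ?thesis by (simp add: unit_half_inv_def r_distr half_add_half)
qed

lemma unit_half_inv_unit_half: "unit_half_inv \<otimes> unit_half = idem"
proof -
  have "core_inv \<otimes> unit_half = half \<otimes> idem"
    by (simp add: unit_half_def half_left_commute) (simp add: m_assoc[symmetric] core_inv_x idem_idem)
  then show ?thesis by (simp add: unit_half_inv_def l_distr half_add_half)
qed

lemma unit_half_coidem: "unit_half \<otimes> coidem = \<zero>"
  by (simp add: unit_half_def m_assoc idem_coidem)

lemma coidem_unit_half: "coidem \<otimes> unit_half = \<zero>"
  by (simp add: unit_half_def half_left_commute)
    (simp add: m_assoc[symmetric] coidem_comm, simp add: m_assoc coidem_idem)

lemma unit_half_inv_coidem: "unit_half_inv \<otimes> coidem = \<zero>"
  by (simp add: unit_half_inv_def l_distr core_inv_coidem)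

lemma coidem_unit_half_inv: "coidem \<otimes> unit_half_inv = \<zero>"
  by (simp add: unit_half_inv_def r_distr coidem_core_inv)

lemma unit_half_add_coidem_Units: "unit_half \<oplus> coidem \<in> Units R"
  by (rule add_Units_of_orthogonal[where v = unit_half_inv and q = coidem])
    (simp_all add: unit_half_unit_half_inv unit_half_inv_unit_half coidem_coidem idem_add_coidem
      unit_half_coidem coidem_unit_half unit_half_inv_coidem coidem_unit_half_inv)

lemma unit_half_coidem_nil_inv: "unit_half \<otimes> (coidem \<otimes> nil_inv) = \<zero>"
  by (simp add: m_assoc[symmetric] unit_half_coidem)

lemma coidem_nil_inv_unit_half: "(coidem \<otimes> nil_inv) \<otimes> unit_half = \<zero>"
proof -
  have "(coidem \<otimes> nil_inv) \<otimes> unit_half = half \<otimes> (coidem \<otimes> ((nil_inv \<otimes> idem) \<otimes> x))"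
    by (simp add: unit_half_def half_left_commute idem_comm[symmetric]) (simp add: m_assoc)
  then show ?thesis by (simp add: nil_inv_idem m_assoc[symmetric] coidem_idem)
qed

lemma unit_half_inv_coidem_one_minus_nil_part: "unit_half_inv \<otimes> (coidem \<otimes> (\<one> \<ominus> nil_part)) = \<zero>"
  by (simp add: m_assoc[symmetric] unit_half_inv_coidem)

lemma coidem_one_minus_nil_part_unit_half_inv: "(coidem \<otimes> (\<one> \<ominus> nil_part)) \<otimes> unit_half_inv = \<zero>"
proof -
  have "(\<one> \<ominus> nil_part) \<otimes> core_inv = core_inv"
    by (simp add: minus_eq l_distr l_minus nil_part_core_inv)
  then show ?thesis by (simp add: m_assoc unit_half_inv_def r_distr coidem_core_inv)
qed

lemma coidem_one_minus_nil_part_inverse: "(coidem \<otimes> (\<one> \<ominus> nil_part)) \<otimes> (coidem \<otimes> nil_inv) = coidem"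
proof -
  have "(coidem \<otimes> (\<one> \<ominus> nil_part)) \<otimes> (coidem \<otimes> nil_inv) = coidem \<otimes> (((\<one> \<ominus> nil_part) \<otimes> coidem) \<otimes> nil_inv)"
    by (simp add: m_assoc)
  also have "\<dots> = (coidem \<otimes> coidem) \<otimes> ((\<one> \<ominus> nil_part) \<otimes> nil_inv)"
    by (simp add: one_minus_nil_part_coidem coidem_one_minus_nil_part[symmetric] m_assoc)
  finally show ?thesis by (simp add: coidem_coidem nil_inv_right)
qed

lemma coidem_nil_inv_inverse: "(coidem \<otimes> nil_inv) \<otimes> (coidem \<otimes> (\<one> \<ominus> nil_part)) = coidem"
proof -
  have "(coidem \<otimes> nil_inv) \<otimes> (coidem \<otimes> (\<one> \<ominus> nil_part)) = coidem \<otimes> ((nil_inv \<otimes> coidem) \<otimes> (\<one> \<ominus> nil_part))"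
    by (simp add: m_assoc)
  also have "\<dots> = (coidem \<otimes> coidem) \<otimes> (nil_inv \<otimes> (\<one> \<ominus> nil_part))"
    by (simp add: nil_inv_coidem m_assoc)
  finally show ?thesis by (simp add: coidem_coidem nil_inv_left)
qed

lemma unit_half_minus_Units: "unit_half \<ominus> coidem \<otimes> (\<one> \<ominus> nil_part) \<in> Units R"
  unfolding minus_eq[of unit_half]
  by (rule add_Units_of_orthogonal[where v = unit_half_inv and q = "\<ominus> (coidem \<otimes> nil_inv)"])
    (simp_all add: l_minus r_minus unit_half_unit_half_inv unit_half_inv_unit_half idem_add_coidem
      coidem_one_minus_nil_part_inverse coidem_nil_inv_inverse unit_half_coidem_nil_inv
      coidem_nil_inv_unit_half unit_half_inv_coidem_one_minus_nil_part
      coidem_one_minus_nil_part_unit_half_inv)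

lemma sum_of_Units: "x = (unit_half \<oplus> coidem) \<oplus> (unit_half \<ominus> coidem \<otimes> (\<one> \<ominus> nil_part))"
proof -
  have "(unit_half \<oplus> coidem) \<oplus> (unit_half \<ominus> coidem \<otimes> (\<one> \<ominus> nil_part))
      = (unit_half \<oplus> unit_half) \<oplus> (coidem \<ominus> (coidem \<ominus> nil_part))"
    by (simp only: coidem_one_minus_nil_part) (simp add: minus_eq a_ac)
  also have "\<dots> = x \<otimes> idem \<oplus> nil_part"
    by (simp add: unit_half_def half_add_half minus_eq minus_add a_assoc[symmetric] r_neg)
  finally show ?thesis using decomposition by simp
qed

end

lemma (in ring) sum_two_Units_if_strongly_pi_regular:
  assumes "x \<in> carrier R" "a \<in> carrier R" "b \<in> carrier R"
    and "x [^] k = a \<otimes> x [^] Suc k" and "x [^] k = x [^] Suc k \<otimes> b"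
    and "\<one> \<oplus> \<one> \<in> Units R"
  shows "\<exists>u\<in>Units R. \<exists>v\<in>Units R. x = u \<oplus> v"
proof -
  interpret fitting_decomposition_two_invertible R x a b k
    by (intro fitting_decomposition_two_invertible.intro fitting_decomposition.intro
        fitting_decomposition_axioms.intro fitting_decomposition_two_invertible_axioms.intro ring_axioms assms)
  show ?thesis using sum_of_Units unit_half_add_coidem_Units unit_half_minus_Units by blast
qed

section \<open>Lifting units along a quotient\<close>

lemma (in ideal) rcos_eq_iff:
  assumes "x \<in> carrier R" and "y \<in> carrier R"
  shows "I +> x = I +> y \<longleftrightarrow> x \<ominus> y \<in> I"
  using a_rcos_module_minus[OF ring_axioms assms(2,1)] a_repr_independence'[of x y]
    a_repr_independenceD[of x y] assms by auto

lemma (in ideal) rcos_in_carrier: "x \<in> carrier R \<Longrightarrow> I +> x \<in> carrier (R Quot I)"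
  by (simp add: FactRing_def a_rcosetsI[OF a_subset])

lemma (in ideal) rcos_surj: "X \<in> carrier (R Quot I) \<Longrightarrow> \<exists>x\<in>carrier R. X = I +> x"
  by (auto simp: FactRing_def A_RCOSETS_def')

lemma (in ideal) rcos_mult:
  "x \<in> carrier R \<Longrightarrow> y \<in> carrier R \<Longrightarrow> (I +> x) \<otimes>\<^bsub>R Quot I\<^esub> (I +> y) = I +> (x \<otimes> y)"
  by (simp add: FactRing_def rcoset_mult_add)

lemma (in ideal) rcos_nat_pow: "x \<in> carrier R \<Longrightarrow> (I +> x) [^]\<^bsub>R Quot I\<^esub> (m::nat) = I +> x [^] m"
  by (induction m) (simp_all add: FactRing_def rcoset_mult_add)

lemma (in ideal) rcos_left_regular:
  assumes "x \<in> carrier R" "a \<in> carrier R" and "x [^] j \<ominus> a \<otimes> x [^] Suc j \<in> I"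
  shows "(I +> x) [^]\<^bsub>R Quot I\<^esub> j = (I +> a) \<otimes>\<^bsub>R Quot I\<^esub> (I +> x) [^]\<^bsub>R Quot I\<^esub> Suc j"
proof -
  have "(I +> x) [^]\<^bsub>R Quot I\<^esub> j = I +> x [^] j" by (rule rcos_nat_pow[OF assms(1)])
  also have "\<dots> = I +> (a \<otimes> x [^] Suc j)" using assms by (subst rcos_eq_iff) simp_all
  also have "\<dots> = (I +> a) \<otimes>\<^bsub>R Quot I\<^esub> (I +> x [^] Suc j)"
    by (rule rcos_mult[symmetric]) (simp_all add: assms(1,2))
  also have "\<dots> = (I +> a) \<otimes>\<^bsub>R Quot I\<^esub> (I +> x) [^]\<^bsub>R Quot I\<^esub> Suc j"
    by (simp only: rcos_nat_pow[OF assms(1)])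
  finally show ?thesis .
qed

lemma (in ideal) rcos_right_regular:
  assumes "x \<in> carrier R" "b \<in> carrier R" and "x [^] j \<ominus> x [^] Suc j \<otimes> b \<in> I"
  shows "(I +> x) [^]\<^bsub>R Quot I\<^esub> j = (I +> x) [^]\<^bsub>R Quot I\<^esub> Suc j \<otimes>\<^bsub>R Quot I\<^esub> (I +> b)"
proof -
  have "(I +> x) [^]\<^bsub>R Quot I\<^esub> j = I +> x [^] j" by (rule rcos_nat_pow[OF assms(1)])
  also have "\<dots> = I +> (x [^] Suc j \<otimes> b)" using assms by (subst rcos_eq_iff) simp_all
  also have "\<dots> = (I +> x [^] Suc j) \<otimes>\<^bsub>R Quot I\<^esub> (I +> b)"
    by (rule rcos_mult[symmetric]) (simp_all add: assms(1,2))
  also have "\<dots> = (I +> x) [^]\<^bsub>R Quot I\<^esub> Suc j \<otimes>\<^bsub>R Quot I\<^esub> (I +> b)"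
    by (simp only: rcos_nat_pow[OF assms(1)])
  finally show ?thesis .
qed

lemma (in ideal) rcos_Units: "x \<in> Units R \<Longrightarrow> I +> x \<in> Units (R Quot I)"
proof -
  assume "x \<in> Units R"
  then obtain y where "x \<in> carrier R" "y \<in> carrier R" "x \<otimes> y = \<one>" "y \<otimes> x = \<one>"
    unfolding Units_def by blast
  then show ?thesis
    unfolding Units_def using rcos_in_carrier
    by (intro CollectI conjI bexI[of _ "I +> y"]) (simp_all add: FactRing_def rcoset_mult_add)
qed

lemma (in ideal) Units_of_rcos_Units:
  assumes lift: "\<And>y. y \<in> carrier R \<Longrightarrow> y \<ominus> \<one> \<in> I \<Longrightarrow> y \<in> Units R"
    and u: "u \<in> carrier R" and "I +> u \<in> Units (R Quot I)"
  shows "u \<in> Units R"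
proof -
  obtain Z where "Z \<in> carrier (R Quot I)"
    and Z: "Z \<otimes>\<^bsub>R Quot I\<^esub> (I +> u) = \<one>\<^bsub>R Quot I\<^esub>" "(I +> u) \<otimes>\<^bsub>R Quot I\<^esub> Z = \<one>\<^bsub>R Quot I\<^esub>"
    using assms(3) unfolding Units_def by blast
  then obtain z where z: "z \<in> carrier R" and "Z = I +> z" using rcos_surj by blast
  then have "I +> (z \<otimes> u) = I +> \<one>" and "I +> (u \<otimes> z) = I +> \<one>"
    using Z u by (simp_all add: FactRing_def rcoset_mult_add)
  then have zu: "z \<otimes> u \<in> Units R" and uz: "u \<otimes> z \<in> Units R"
    using lift z u by (simp_all add: rcos_eq_iff)
  have left: "(inv (z \<otimes> u) \<otimes> z) \<otimes> u = \<one>"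
    using zu z u by (simp add: m_assoc)
  have right: "u \<otimes> (z \<otimes> inv (u \<otimes> z)) = \<one>"
    using uz z u by (simp add: m_assoc[symmetric])
  have "inv (z \<otimes> u) \<otimes> z = z \<otimes> inv (u \<otimes> z)"
    using inv_unique[OF left right] zu uz z u by simp
  moreover have "z \<otimes> inv (u \<otimes> z) \<in> carrier R" using uz z by simp
  ultimately show ?thesis
    using left right u unfolding Units_def by (intro CollectI conjI bexI[of _ "z \<otimes> inv (u \<otimes> z)"]) simp_all
qed

lemma (in ideal) sum_two_Units_lift:
  assumes lift: "\<And>y. y \<in> carrier R \<Longrightarrow> y \<ominus> \<one> \<in> I \<Longrightarrow> y \<in> Units R"
    and x: "x \<in> carrier R"
    and U: "U \<in> Units (R Quot I)" and V: "V \<in> Units (R Quot I)" and split: "I +> x = U \<oplus>\<^bsub>R Quot I\<^esub> V"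
  shows "\<exists>u\<in>Units R. \<exists>v\<in>Units R. x = u \<oplus> v"
proof -
  interpret Q: ring "R Quot I" by (rule quotient_is_ring)
  interpret h: ring_hom_ring R "R Quot I" "(+>) I" by (rule rcos_ring_hom_ring)
  obtain u where u: "u \<in> carrier R" "U = I +> u" using rcos_surj U by blast
  have UV: "U \<in> carrier (R Quot I)" "V \<in> carrier (R Quot I)" using U V by auto
  have "I +> (x \<ominus> u) = (I +> x) \<oplus>\<^bsub>R Quot I\<^esub> \<ominus>\<^bsub>R Quot I\<^esub> U"
    using x u by (simp add: minus_eq)
  also have "\<dots> = V" using UV by (simp add: split Q.a_comm[of U V] Q.a_assoc Q.r_neg)
  finally have "I +> (x \<ominus> u) = V" .
  then have "u \<in> Units R" and "x \<ominus> u \<in> Units R"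
    using Units_of_rcos_Units[OF lift] u U V x by auto
  moreover have "x = u \<oplus> (x \<ominus> u)"
    using x u by (simp add: minus_eq a_lcomm[of u] r_neg)
  ultimately show ?thesis by blast
qed

section \<open>The group ring as a ring\<close>

lemma gr_mult_eq:
  "k < n \<Longrightarrow> gr_mult n f g k = (\<Sum>i<n. \<Sum>j<n. if (i + j) mod n = k then f i * g j else 0)"
  by (simp add: gr_mult_def)

lemma gr_mult_eq_0: "n \<le> k \<Longrightarrow> gr_mult n f g k = 0"
  by (simp add: gr_mult_def)

lemma gr_mult_closed: "gr_mult n f g \<in> gr_carrier n"
  by (simp add: gr_mult_def gr_carrier_def)

lemma gr_one_closed: "n > 0 \<Longrightarrow> gr_one n \<in> gr_carrier n"
  by (simp add: gr_one_def gr_carrier_def)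

lemma sum_swap3:
  "(\<Sum>i\<in>A. \<Sum>j\<in>B. \<Sum>l\<in>C. F i j l) = (\<Sum>j\<in>B. \<Sum>l\<in>C. \<Sum>i\<in>A. F i j l)"
proof -
  have "(\<Sum>i\<in>A. \<Sum>j\<in>B. \<Sum>l\<in>C. F i j l) = (\<Sum>j\<in>B. \<Sum>i\<in>A. \<Sum>l\<in>C. F i j l)"
    by (rule sum.swap)
  also have "\<dots> = (\<Sum>j\<in>B. \<Sum>l\<in>C. \<Sum>i\<in>A. F i j l)"
    by (intro sum.cong refl sum.swap)
  finally show ?thesis .
qed

lemma sum_swap4:
  "(\<Sum>i\<in>A. \<Sum>j\<in>B. \<Sum>l\<in>C. \<Sum>m\<in>D. F i j l m) = (\<Sum>j\<in>B. \<Sum>l\<in>C. \<Sum>m\<in>D. \<Sum>i\<in>A. F i j l m)"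
proof -
  have "(\<Sum>i\<in>A. \<Sum>j\<in>B. \<Sum>l\<in>C. \<Sum>m\<in>D. F i j l m) = (\<Sum>j\<in>B. \<Sum>l\<in>C. \<Sum>i\<in>A. \<Sum>m\<in>D. F i j l m)"
    by (rule sum_swap3)
  also have "\<dots> = (\<Sum>j\<in>B. \<Sum>l\<in>C. \<Sum>m\<in>D. \<Sum>i\<in>A. F i j l m)"
    by (intro sum.cong refl sum.swap)
  finally show ?thesis .
qed

lemma gr_mult_assoc_expansion:
  fixes f g h :: "nat \<Rightarrow> 'a::ring_1"
  assumes "n > 0" and "k < n"
  defines "T \<equiv> (\<Sum>a<n. \<Sum>b<n. \<Sum>c<n. if (a + b + c) mod n = k then f a * g b * h c else 0)"
  shows "gr_mult n (gr_mult n f g) h k = T" and "gr_mult n f (gr_mult n g h) k = T"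
proof -
  have "gr_mult n (gr_mult n f g) h k =
    (\<Sum>i<n. \<Sum>c<n. \<Sum>a<n. \<Sum>b<n. if (a + b) mod n = i then (if (i + c) mod n = k then f a * g b * h c else 0) else 0)"
    unfolding gr_mult_eq[OF assms(2)]
    by (intro sum.cong refl) (auto simp: gr_mult_eq sum_distrib_right intro!: sum.cong sum.neutral)
  also have "\<dots> = (\<Sum>c<n. \<Sum>a<n. \<Sum>b<n. if ((a + b) mod n + c) mod n = k then f a * g b * h c else 0)"
    using assms(1) by (subst sum_swap4) (simp add: sum.delta)
  also have "\<dots> = T"
    unfolding T_def by (subst sum_swap3) (simp add: mod_add_left_eq)
  finally show "gr_mult n (gr_mult n f g) h k = T" .
  have "gr_mult n f (gr_mult n g h) k =
    (\<Sum>a<n. \<Sum>i<n. \<Sum>b<n. \<Sum>c<n. if (b + c) mod n = i then (if (a + i) mod n = k then f a * g b * h c else 0) else 0)"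
    unfolding gr_mult_eq[OF assms(2)]
    by (intro sum.cong refl) (auto simp: gr_mult_eq sum_distrib_left mult.assoc intro!: sum.cong sum.neutral)
  also have "\<dots> = (\<Sum>a<n. \<Sum>b<n. \<Sum>c<n. if (a + (b + c) mod n) mod n = k then f a * g b * h c else 0)"
    using assms(1) by (subst sum_swap3) (simp add: sum.delta)
  also have "\<dots> = T"
    unfolding T_def by (simp add: mod_add_right_eq add.assoc)
  finally show "gr_mult n f (gr_mult n g h) k = T" .
qed

lemma gr_mult_assoc: "n > 0 \<Longrightarrow> gr_mult n (gr_mult n f g) h = gr_mult n f (gr_mult n g h)"
proof
  fix k assume "n > 0"
  show "gr_mult n (gr_mult n f g) h k = gr_mult n f (gr_mult n g h) k"
    using gr_mult_assoc_expansion[OF \<open>n > 0\<close>, of k f g h]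
    by (cases "k < n") (simp_all add: gr_mult_eq_0)
qed

lemma gr_mult_one_left:
  assumes "n > 0" and "f \<in> gr_carrier n"
  shows "gr_mult n (gr_one n) f = f"
proof
  fix k show "gr_mult n (gr_one n) f k = f k"
  proof (cases "k < n")
    case True
    have "gr_mult n (gr_one n) f k = (\<Sum>i<n. if i = 0 then (\<Sum>j<n. if (i + j) mod n = k then f j else 0) else 0)"
      unfolding gr_mult_eq[OF True] by (intro sum.cong refl) (auto simp: gr_one_def intro!: sum.neutral)
    also have "\<dots> = (\<Sum>j<n. if j = k then f j else 0)" using assms(1) True by (simp cong: if_cong)
    finally show ?thesis using True by simp
  qed (use assms in \<open>simp add: gr_mult_eq_0 gr_carrier_def\<close>)
qed

lemma gr_mult_one_right:
  assumes "n > 0" and "f \<in> gr_carrier n"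
  shows "gr_mult n f (gr_one n) = f"
proof
  fix k show "gr_mult n f (gr_one n) k = f k"
  proof (cases "k < n")
    case True
    have "gr_mult n f (gr_one n) k = (\<Sum>i<n. \<Sum>j<n. if j = 0 then (if (i + j) mod n = k then f i else 0) else 0)"
      unfolding gr_mult_eq[OF True] by (intro sum.cong refl) (auto simp: gr_one_def)
    also have "\<dots> = (\<Sum>i<n. if i = k then f i else 0)"
      using assms(1) True by (intro sum.cong refl) (simp add: sum.delta)
    finally show ?thesis using True by simp
  qed (use assms in \<open>simp add: gr_mult_eq_0 gr_carrier_def\<close>)
qed

lemma gr_mult_add_left: "gr_mult n (\<lambda>l. f l + g l) h = (\<lambda>l. gr_mult n f h l + gr_mult n g h l)"
  by (rule ext) (auto simp: gr_mult_def distrib_right sum.distrib[symmetric] intro!: sum.cong)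

lemma gr_mult_add_right: "gr_mult n f (\<lambda>l. g l + h l) = (\<lambda>l. gr_mult n f g l + gr_mult n f h l)"
  by (rule ext) (auto simp: gr_mult_def distrib_left sum.distrib[symmetric] intro!: sum.cong)

lemma gr_mult_scale_left: "gr_mult n (\<lambda>l. c * f l) g = (\<lambda>l. c * gr_mult n f g l)"
  by (rule ext) (auto simp: gr_mult_def sum_distrib_left mult.assoc intro!: sum.cong)

lemma gr_mult_scale_right: "gr_mult n f (\<lambda>l. g l * c) = (\<lambda>l. gr_mult n f g l * c)"
  by (rule ext) (auto simp: gr_mult_def sum_distrib_right mult.assoc intro!: sum.cong)

lemma gr_mult_sum_left: "gr_mult n (\<lambda>l. \<Sum>i\<in>I. f i l) g = (\<lambda>l. \<Sum>i\<in>I. gr_mult n (f i) g l)"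
proof
  fix k
  show "gr_mult n (\<lambda>l. \<Sum>i\<in>I. f i l) g k = (\<Sum>i\<in>I. gr_mult n (f i) g k)"
  proof (cases "k < n")
    case True
    have "gr_mult n (\<lambda>l. \<Sum>i\<in>I. f i l) g k = (\<Sum>a<n. \<Sum>b<n. \<Sum>i\<in>I. if (a + b) mod n = k then f i a * g b else 0)"
      unfolding gr_mult_eq[OF True] by (intro sum.cong refl) (auto simp: sum_distrib_right)
    also have "\<dots> = (\<Sum>i\<in>I. gr_mult n (f i) g k)"
      unfolding gr_mult_eq[OF True] by (rule sum_swap3[symmetric])
    finally show ?thesis .
  qed (simp add: gr_mult_eq_0)
qed

lemma gr_mult_sum_right: "gr_mult n f (\<lambda>l. \<Sum>i\<in>I. g i l) = (\<lambda>l. \<Sum>i\<in>I. gr_mult n f (g i) l)"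
proof
  fix k
  show "gr_mult n f (\<lambda>l. \<Sum>i\<in>I. g i l) k = (\<Sum>i\<in>I. gr_mult n f (g i) k)"
  proof (cases "k < n")
    case True
    have "gr_mult n f (\<lambda>l. \<Sum>i\<in>I. g i l) k = (\<Sum>a<n. \<Sum>b<n. \<Sum>i\<in>I. if (a + b) mod n = k then f a * g i b else 0)"
      unfolding gr_mult_eq[OF True] by (intro sum.cong refl) (auto simp: sum_distrib_left)
    also have "\<dots> = (\<Sum>i\<in>I. gr_mult n f (g i) k)"
      unfolding gr_mult_eq[OF True] by (rule sum_swap3[symmetric])
    finally show ?thesis .
  qed (simp add: gr_mult_eq_0)
qed

definition group_ring :: "nat \<Rightarrow> (nat \<Rightarrow> 'a::ring_1) ring" where
  "group_ring n = \<lparr>carrier = gr_carrier n, mult = gr_mult n, one = gr_one n, zero = (\<lambda>_. 0),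
     add = (\<lambda>f g l. f l + g l)\<rparr>"

lemma group_ring_simps [simp]:
  "carrier (group_ring n) = gr_carrier n" "mult (group_ring n) = gr_mult n"
  "one (group_ring n) = gr_one n" "zero (group_ring n) = (\<lambda>_. 0)"
  "add (group_ring n) = (\<lambda>f g l. f l + g l)"
  by (simp_all add: group_ring_def)

lemma ring_group_ring: "n > 0 \<Longrightarrow> ring (group_ring n)"
proof (rule ringI)
  show "abelian_group (group_ring n)"
  proof (rule abelian_groupI)
    fix x assume "x \<in> carrier (group_ring n)"
    then show "\<exists>y\<in>carrier (group_ring n). y \<oplus>\<^bsub>group_ring n\<^esub> x = \<zero>\<^bsub>group_ring n\<^esub>"
      by (intro bexI[of _ "\<lambda>l. - x l"]) (auto simp: gr_carrier_def)
  qed (auto simp: gr_carrier_def add.assoc add.commute)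
  assume "n > 0"
  then show "monoid (group_ring n)"
    by (intro monoidI) (auto simp: gr_mult_closed gr_one_closed gr_mult_assoc gr_mult_one_left gr_mult_one_right)
qed (auto simp: gr_mult_add_left gr_mult_add_right)

lemma group_ring_a_inv:
  assumes "n > 0" and "f \<in> gr_carrier n"
  shows "\<ominus>\<^bsub>group_ring n\<^esub> f = (\<lambda>l. - f l)"
proof -
  interpret ring "group_ring n" by (rule ring_group_ring[OF assms(1)])
  show ?thesis
    by (rule minus_equality) (use assms(2) in \<open>auto simp: gr_carrier_def\<close>)
qed

lemma group_ring_minus:
  "n > 0 \<Longrightarrow> f \<in> gr_carrier n \<Longrightarrow> g \<in> gr_carrier n \<Longrightarrow> f \<ominus>\<^bsub>group_ring n\<^esub> g = (\<lambda>l. f l - g l)"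
  by (simp add: a_minus_def group_ring_a_inv)

lemma gr_unit_iff_Units: "gr_unit n u \<longleftrightarrow> u \<in> Units (group_ring n)"
  by (auto simp: gr_unit_def Units_def)

section \<open>The radical ideal of the group ring\<close>

definition gr_rad :: "nat \<Rightarrow> (nat \<Rightarrow> 'a::ring_1) set" where
  "gr_rad n = {f \<in> gr_carrier n. \<forall>k. f k \<in> jacobson}"

lemma gr_mult_gr_rad_left: "w \<in> gr_rad n \<Longrightarrow> gr_mult n f w \<in> gr_rad n"
  using gr_mult_closed[of n f w]
  by (auto simp: gr_rad_def gr_mult_def intro!: jacobson_sum jacobson_mult_left jacobson_zero)

lemma gr_mult_gr_rad_right:
  "local_ring TYPE('a::ring_1) \<Longrightarrow> (w :: nat \<Rightarrow> 'a) \<in> gr_rad n \<Longrightarrow> gr_mult n w f \<in> gr_rad n"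
  using gr_mult_closed[of n w f]
  by (auto simp: gr_rad_def gr_mult_def intro!: jacobson_sum local_ring_jacobson_mult_right jacobson_zero)

lemma ideal_gr_rad:
  assumes "n > 0" and "local_ring TYPE('a::ring_1)"
  shows "ideal (gr_rad n) (group_ring n :: (nat \<Rightarrow> 'a) ring)"
proof -
  interpret ring "group_ring n :: (nat \<Rightarrow> 'a) ring" by (rule ring_group_ring[OF assms(1)])
  show ?thesis
  proof (rule idealI)
    show "ring (group_ring n :: (nat \<Rightarrow> 'a) ring)" by (rule ring_group_ring[OF assms(1)])
    show "subgroup (gr_rad n) (add_monoid (group_ring n :: (nat \<Rightarrow> 'a) ring))"
    proof (rule add.subgroupI)
      show "gr_rad n \<subseteq> carrier (group_ring n)" by (auto simp: gr_rad_def)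
      show "gr_rad n \<noteq> {}"
        using jacobson_zero by (auto simp: gr_rad_def gr_carrier_def intro!: exI[of _ "\<lambda>_. 0"])
      fix f g :: "nat \<Rightarrow> 'a" assume "f \<in> gr_rad n" "g \<in> gr_rad n"
      then show "\<ominus>\<^bsub>group_ring n\<^esub> f \<in> gr_rad n" and "f \<oplus>\<^bsub>group_ring n\<^esub> g \<in> gr_rad n"
        using assms(1) by (auto simp: gr_rad_def gr_carrier_def group_ring_a_inv jacobson_uminus jacobson_add)
    qed
  qed (auto simp: gr_mult_gr_rad_left gr_mult_gr_rad_right[OF assms(2)])
qed

text \<open>For \<open>m = 0\<close> this makes \<open>y\<close> left invertible; it is reached from \<open>m = n\<close> by clearing one
  coordinate of the error term at a time.\<close>

definition gr_left_divisible_below :: "nat \<Rightarrow> (nat \<Rightarrow> 'a::ring_1) \<Rightarrow> nat \<Rightarrow> bool" where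
  "gr_left_divisible_below n y m \<longleftrightarrow> (\<forall>s\<in>gr_carrier n. \<exists>q\<in>gr_carrier n. \<exists>c\<in>gr_rad n.
     (\<forall>l\<ge>m. c l = 0) \<and> s = (\<lambda>l. gr_mult n q y l + c l))"

lemma gr_left_divisible_below_order:
  fixes y :: "nat \<Rightarrow> 'a::ring_1"
  assumes "n > 0" and "y \<in> gr_carrier n" and "(\<lambda>l. y l - gr_one n l) \<in> gr_rad n"
  shows "gr_left_divisible_below n y n"
  unfolding gr_left_divisible_below_def
proof
  fix s :: "nat \<Rightarrow> 'a" assume s: "s \<in> gr_carrier n"
  define w where "w = (\<lambda>l. y l - gr_one n l)"
  have "y = (\<lambda>l. gr_one n l + w l)" by (simp add: w_def)
  then have "gr_mult n s y = (\<lambda>l. s l + gr_mult n s w l)"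
    using gr_mult_add_right[of n s] gr_mult_one_right[OF assms(1) s] by simp
  moreover have "gr_mult n s w \<in> gr_rad n" using assms(3) gr_mult_gr_rad_left by (simp add: w_def)
  ultimately show "\<exists>q\<in>gr_carrier n. \<exists>c\<in>gr_rad n. (\<forall>l\<ge>n. c l = 0) \<and> s = (\<lambda>l. gr_mult n q y l + c l)"
    using s by (intro bexI[of _ s] bexI[of _ "\<lambda>l. - gr_mult n s w l"])
      (auto simp: gr_rad_def gr_carrier_def jacobson_uminus gr_mult_eq_0)
qed

lemma gr_left_divisible_below_basis:
  fixes y :: "nat \<Rightarrow> 'a::ring_1"
  assumes "k < n" and divisible: "gr_left_divisible_below n y (Suc k)"
  obtains q d where "q \<in> gr_carrier n" and "d \<in> gr_rad n" and "\<forall>l\<ge>k. d l = 0"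
    and "\<And>l. (if l = k then 1 else 0) = gr_mult n q y l + d l"
proof -
  define \<delta> :: "nat \<Rightarrow> 'a" where "\<delta> = (\<lambda>l. if l = k then 1 else 0)"
  have "\<delta> \<in> gr_carrier n" using assms(1) by (auto simp: \<delta>_def gr_carrier_def)
  then obtain q d where q: "q \<in> gr_carrier n" and d: "d \<in> gr_rad n" "\<forall>l\<ge>Suc k. d l = 0"
    and \<delta>: "\<delta> = (\<lambda>l. gr_mult n q y l + d l)"
    using divisible unfolding gr_left_divisible_below_def by blast
  have "d k \<in> jacobson" using d by (auto simp: gr_rad_def)
  then obtain e where e: "e * (1 - d k) = 1" by (rule jacobson_one_minus_invertible)
  define d' where "d' = (\<lambda>l. if l = k then 0 else e * d l)"
  \<comment> \<open>Moving the \<open>k\<close>-th coordinate of \<open>d\<close> to the left and dividing by the unit \<open>1 - d k\<close>.\<close>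
  have "\<delta> l = gr_mult n (\<lambda>l. e * q l) y l + d' l" for l
  proof -
    have qy: "gr_mult n q y l = \<delta> l - d l" using fun_cong[OF \<delta>, of l] by (simp add: algebra_simps)
    show ?thesis unfolding gr_mult_scale_left qy using e by (simp add: \<delta>_def d'_def algebra_simps)
  qed
  moreover have "(\<lambda>l. e * q l) \<in> gr_carrier n" using q by (simp add: gr_carrier_def)
  moreover have "d' \<in> gr_rad n" using d assms(1)
    by (auto simp: d'_def gr_rad_def gr_carrier_def intro!: jacobson_mult_left jacobson_zero)
  moreover have "\<forall>l\<ge>k. d' l = 0" using d by (auto simp: d'_def)
  ultimately show thesis using that unfolding \<delta>_def by blast
qed

lemma gr_left_divisible_below_Suc:
  fixes y :: "nat \<Rightarrow> 'a::ring_1"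
  assumes "k < n" and divisible: "gr_left_divisible_below n y (Suc k)"
  shows "gr_left_divisible_below n y k"
  unfolding gr_left_divisible_below_def
proof
  fix s :: "nat \<Rightarrow> 'a" assume "s \<in> gr_carrier n"
  then obtain q c where q: "q \<in> gr_carrier n" and c: "c \<in> gr_rad n" "\<forall>l\<ge>Suc k. c l = 0"
    and s: "s = (\<lambda>l. gr_mult n q y l + c l)"
    using divisible unfolding gr_left_divisible_below_def by blast
  obtain q' d where q': "q' \<in> gr_carrier n" and d: "d \<in> gr_rad n" "\<forall>l\<ge>k. d l = 0"
    and basis: "\<And>l. (if l = k then 1 else 0) = gr_mult n q' y l + d l"
    by (rule gr_left_divisible_below_basis[OF assms]) blast
  define c' where "c' = (\<lambda>l. if l = k then 0 else c l)"
  define q'' where "q'' = (\<lambda>l. q l + c k * q' l)"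
  define c'' where "c'' = (\<lambda>l. c k * d l + c' l)"
  have q''y: "gr_mult n q'' y = (\<lambda>l. gr_mult n q y l + c k * gr_mult n q' y l)"
    unfolding q''_def gr_mult_add_left gr_mult_scale_left by simp
  show "\<exists>q\<in>gr_carrier n. \<exists>c\<in>gr_rad n. (\<forall>l\<ge>k. c l = 0) \<and> s = (\<lambda>l. gr_mult n q y l + c l)"
  proof (intro bexI conjI)
    show "q'' \<in> gr_carrier n" using q q' by (auto simp: q''_def gr_carrier_def)
    show "c'' \<in> gr_rad n" using c d assms(1)
      by (auto simp: c''_def c'_def gr_rad_def gr_carrier_def intro!: jacobson_add jacobson_mult_left jacobson_zero)
    show "\<forall>l\<ge>k. c'' l = 0" using c d by (auto simp: c''_def c'_def)
    show "s = (\<lambda>l. gr_mult n q'' y l + c'' l)"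
    proof
      fix l
      have "c l = c k * (if l = k then 1 else 0) + c' l" by (simp add: c'_def)
      then show "s l = gr_mult n q'' y l + c'' l"
        unfolding s q''y c''_def basis by (simp add: algebra_simps)
    qed
  qed
qed

lemma gr_left_invertible_if_one_mod_gr_rad:
  assumes "n > 0" and "y \<in> gr_carrier n" and "(\<lambda>l. y l - gr_one n l) \<in> gr_rad n"
  obtains z where "z \<in> gr_carrier n" and "gr_mult n z y = gr_one n"
proof -
  have "gr_left_divisible_below n y m" if "m \<le> n" for m
    using that
  proof (induction rule: inc_induct)
    case base
    show ?case by (rule gr_left_divisible_below_order[OF assms])
  next
    case (step k)
    show ?case by (rule gr_left_divisible_below_Suc[OF step.hyps(2) step.IH])
  qed
  from this[OF le0]
  have "\<exists>z\<in>gr_carrier n. \<exists>c\<in>gr_rad n. (\<forall>l\<ge>0. c l = 0) \<and> gr_one n = (\<lambda>l. gr_mult n z y l + c l)"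
    using gr_one_closed[OF assms(1)] unfolding gr_left_divisible_below_def by blast
  then obtain z c where z: "z \<in> gr_carrier n" and "\<forall>l. c l = 0"
    and one: "gr_one n = (\<lambda>l. gr_mult n z y l + c l)"
    by auto
  then have "c = (\<lambda>_. 0)" by auto
  with one have "gr_mult n z y = gr_one n" by simp
  with z show thesis by (rule that)
qed

lemma Units_group_ring_if_one_mod_gr_rad:
  fixes y :: "nat \<Rightarrow> 'a::ring_1"
  assumes n: "n > 0" and "y \<in> carrier (group_ring n)"
    and y_one: "y \<ominus>\<^bsub>group_ring n\<^esub> \<one>\<^bsub>group_ring n\<^esub> \<in> gr_rad n"
  shows "y \<in> Units (group_ring n)"
proof -
  interpret ring "group_ring n :: (nat \<Rightarrow> 'a) ring" by (rule ring_group_ring[OF n])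
  have y: "y \<in> gr_carrier n" using \<open>y \<in> carrier (group_ring n)\<close> by simp
  define w where "w = (\<lambda>l. y l - gr_one n l)"
  have w: "w \<in> gr_rad n" using y_one group_ring_minus[OF n y gr_one_closed[OF n]] by (simp add: w_def)
  obtain z where z: "z \<in> gr_carrier n" and zy: "gr_mult n z y = gr_one n"
    using gr_left_invertible_if_one_mod_gr_rad[OF n y] w by (auto simp: w_def)
  \<comment> \<open>\<open>z = 1 - z w\<close> is again congruent to \<open>1\<close>, so it has a left inverse, which must be \<open>y\<close>.\<close>
  have "y = (\<lambda>l. gr_one n l + w l)" by (simp add: w_def)
  then have "gr_one n = (\<lambda>l. z l + gr_mult n z w l)"
    using zy gr_mult_add_right[of n z] gr_mult_one_right[OF n z] by simp
  then have "(\<lambda>l. z l - gr_one n l) = (\<lambda>l. - gr_mult n z w l)"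
    by (metis add_diff_cancel_left' minus_diff_eq)
  moreover have "(\<lambda>l. - gr_mult n z w l) \<in> gr_rad n"
    using gr_mult_gr_rad_left[OF w, of z]
    by (auto simp: gr_rad_def gr_carrier_def jacobson_uminus gr_mult_eq_0)
  ultimately obtain z' where "z' \<in> gr_carrier n" "gr_mult n z' z = gr_one n"
    using gr_left_invertible_if_one_mod_gr_rad[OF n z] by metis
  then have "z' = y"
    using inv_unique[of z' z y] z y zy by simp
  then show ?thesis
    using z y zy \<open>gr_mult n z' z = gr_one n\<close> unfolding Units_def by auto
qed

section \<open>Strong pi-regularity modulo the radical\<close>

lemma sum_split_at:
  "j < m \<Longrightarrow> (\<Sum>k<m. f k) = (\<Sum>k<j. f k) + f j + (\<Sum>k\<in>{Suc j..<m}. f k)"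
proof -
  assume "j < m"
  then have "(\<Sum>k\<in>{0..<m}. f k) = (\<Sum>k\<in>{0..<j}. f k) + (\<Sum>k\<in>{j..<m}. f k)"
    by (intro sum.atLeastLessThan_concat[symmetric]) auto
  also have "(\<Sum>k\<in>{j..<m}. f k) = f j + (\<Sum>k\<in>{Suc j..<m}. f k)"
    using \<open>j < m\<close> by (rule sum.atLeast_Suc_lessThan)
  finally show ?thesis by (simp add: atLeast0LessThan add.assoc)
qed

lemma solve_left_relation_mod_jacobson:
  fixes p c :: "nat \<Rightarrow> 'a::ring_1"
  assumes local: "local_ring TYPE('a)" and relation: "(\<Sum>k<m. c k * p k) \<in> jacobson"
    and "j < m" and g: "g * c j = 1" and below: "\<And>k. k < j \<Longrightarrow> c k \<in> jacobson"
  shows "p j - (\<Sum>k\<in>{Suc j..<m}. - (g * c k) * p k) \<in> jacobson"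
proof -
  have "p j - (\<Sum>k\<in>{Suc j..<m}. - (g * c k) * p k) = g * ((\<Sum>k<m. c k * p k) - (\<Sum>k<j. c k * p k))"
    using sum_split_at[OF \<open>j < m\<close>, of "\<lambda>k. c k * p k"] g
    by (simp add: sum_negf sum_distrib_left algebra_simps flip: mult.assoc)
  also have "\<dots> \<in> jacobson"
    by (intro jacobson_mult_left jacobson_diff)
      (use relation below in \<open>auto intro!: jacobson_sum local_ring_jacobson_mult_right[OF local]\<close>)
  finally show ?thesis .
qed

lemma solve_right_relation_mod_jacobson:
  fixes p c :: "nat \<Rightarrow> 'a::ring_1"
  assumes local: "local_ring TYPE('a)" and relation: "(\<Sum>k<m. p k * c k) \<in> jacobson"
    and "j < m" and g: "c j * g = 1" and below: "\<And>k. k < j \<Longrightarrow> c k \<in> jacobson"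
  shows "p j - (\<Sum>k\<in>{Suc j..<m}. p k * - (c k * g)) \<in> jacobson"
proof -
  have "p j - (\<Sum>k\<in>{Suc j..<m}. p k * - (c k * g)) = ((\<Sum>k<m. p k * c k) - (\<Sum>k<j. p k * c k)) * g"
    using sum_split_at[OF \<open>j < m\<close>, of "\<lambda>k. p k * c k"] g
    by (simp add: sum_negf sum_distrib_right algebra_simps)
  also have "\<dots> \<in> jacobson"
    by (intro local_ring_jacobson_mult_right[OF local] jacobson_diff)
      (use relation below in \<open>auto intro!: jacobson_sum jacobson_mult_left\<close>)
  finally show ?thesis .
qed

lemma gr_pow_left_regular_mod_gr_rad:
  fixes x :: "nat \<Rightarrow> 'a::ring_1"
  assumes n: "n > 0" and local: "local_ring TYPE('a)" and x: "x \<in> gr_carrier n"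
  obtains j a where "a \<in> gr_carrier n"
    and "x [^]\<^bsub>group_ring n\<^esub> j \<ominus>\<^bsub>group_ring n\<^esub> a \<otimes>\<^bsub>group_ring n\<^esub> x [^]\<^bsub>group_ring n\<^esub> Suc j \<in> gr_rad n"
proof -
  interpret ring "group_ring n :: (nat \<Rightarrow> 'a) ring" by (rule ring_group_ring[OF n])
  define P where "P m = x [^]\<^bsub>group_ring n\<^esub> m" for m :: nat
  have P_closed: "P m \<in> gr_carrier n" for m using nat_pow_closed[of x m] x by (simp add: P_def)
  have P_mult: "gr_mult n (P i) (P k) = P (i + k)" for i k using nat_pow_mult[of x] x by (simp add: P_def)
  have "\<forall>k\<in>{..<Suc n}. \<forall>l\<ge>n. P k l \<in> jacobson"
    using P_closed jacobson_zero by (auto simp: gr_carrier_def)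
  then obtain c where c_nonzero: "\<exists>k<Suc n. c k \<notin> jacobson"
    and c_dep: "\<forall>l. (\<Sum>k<Suc n. c k * P k l) \<in> jacobson"
    using left_dependent_mod_jacobson[OF local, of "{..<Suc n}" n P] by auto
  then obtain j where j: "j < Suc n" "c j \<notin> jacobson" and below: "\<And>k. k < j \<Longrightarrow> c k \<in> jacobson"
    using exists_least_iff[of "\<lambda>k. k < Suc n \<and> c k \<notin> jacobson"] by (metis less_trans)
  obtain g where g: "g * c j = 1" using local_ring_invertible[OF local j(2)] by metis
  define a where "a = (\<lambda>l. \<Sum>k\<in>{Suc j..<Suc n}. (- (g * c k)) * P (k - Suc j) l)"
  have a_closed: "a \<in> gr_carrier n" using P_closed by (simp add: a_def gr_carrier_def)
  have aP: "gr_mult n a (P (Suc j)) = (\<lambda>l. \<Sum>k\<in>{Suc j..<Suc n}. (- (g * c k)) * P k l)"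
    unfolding a_def gr_mult_sum_left
    by (intro ext sum.cong refl) (simp only: gr_mult_scale_left P_mult, simp)
  have "P j l - gr_mult n a (P (Suc j)) l \<in> jacobson" for l
    using solve_left_relation_mod_jacobson[OF local c_dep[rule_format, of l] j(1) g below] by (simp add: aP)
  then have "(\<lambda>l. P j l - gr_mult n a (P (Suc j)) l) \<in> gr_rad n"
    using P_closed gr_mult_closed[of n a "P (Suc j)"] by (simp add: gr_rad_def gr_carrier_def)
  then show thesis
    using that[OF a_closed] group_ring_minus[OF n P_closed gr_mult_closed] by (simp add: P_def)
qed

lemma gr_pow_right_regular_mod_gr_rad:
  fixes x :: "nat \<Rightarrow> 'a::ring_1"
  assumes n: "n > 0" and local: "local_ring TYPE('a)" and x: "x \<in> gr_carrier n"
  obtains j b where "b \<in> gr_carrier n"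
    and "x [^]\<^bsub>group_ring n\<^esub> j \<ominus>\<^bsub>group_ring n\<^esub> x [^]\<^bsub>group_ring n\<^esub> Suc j \<otimes>\<^bsub>group_ring n\<^esub> b \<in> gr_rad n"
proof -
  interpret ring "group_ring n :: (nat \<Rightarrow> 'a) ring" by (rule ring_group_ring[OF n])
  define P where "P m = x [^]\<^bsub>group_ring n\<^esub> m" for m :: nat
  have P_closed: "P m \<in> gr_carrier n" for m using nat_pow_closed[of x m] x by (simp add: P_def)
  have P_mult: "gr_mult n (P i) (P k) = P (i + k)" for i k using nat_pow_mult[of x] x by (simp add: P_def)
  have "\<forall>k\<in>{..<Suc n}. \<forall>l\<ge>n. P k l \<in> jacobson"
    using P_closed jacobson_zero by (auto simp: gr_carrier_def)
  then obtain c where c_nonzero: "\<exists>k<Suc n. c k \<notin> jacobson"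
    and c_dep: "\<forall>l. (\<Sum>k<Suc n. P k l * c k) \<in> jacobson"
    using right_dependent_mod_jacobson[OF local, of "{..<Suc n}" n P] by auto
  then obtain j where j: "j < Suc n" "c j \<notin> jacobson" and below: "\<And>k. k < j \<Longrightarrow> c k \<in> jacobson"
    using exists_least_iff[of "\<lambda>k. k < Suc n \<and> c k \<notin> jacobson"] by (metis less_trans)
  obtain g where g: "c j * g = 1" using local_ring_invertible[OF local j(2)] by metis
  define b where "b = (\<lambda>l. \<Sum>k\<in>{Suc j..<Suc n}. P (k - Suc j) l * (- (c k * g)))"
  have b_closed: "b \<in> gr_carrier n" using P_closed by (simp add: b_def gr_carrier_def)
  have Pb: "gr_mult n (P (Suc j)) b = (\<lambda>l. \<Sum>k\<in>{Suc j..<Suc n}. P k l * (- (c k * g)))"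
    unfolding b_def gr_mult_sum_right
    by (intro ext sum.cong refl) (simp only: gr_mult_scale_right P_mult, simp)
  have "P j l - gr_mult n (P (Suc j)) b l \<in> jacobson" for l
    using solve_right_relation_mod_jacobson[OF local c_dep[rule_format, of l] j(1) g below] by (simp add: Pb)
  then have "(\<lambda>l. P j l - gr_mult n (P (Suc j)) b l) \<in> gr_rad n"
    using P_closed gr_mult_closed[of n "P (Suc j)" b] by (simp add: gr_rad_def gr_carrier_def)
  then show thesis
    using that[OF b_closed] group_ring_minus[OF n P_closed gr_mult_closed] by (simp add: P_def)
qed

lemma one_add_one_Units_group_ring:
  fixes n :: nat
  assumes n: "n > 0" and local: "local_ring TYPE('a::ring_1)" and char: "char_rad_quot TYPE('a) \<noteq> 2"
  shows "\<one>\<^bsub>group_ring n\<^esub> \<oplus>\<^bsub>group_ring n\<^esub> \<one>\<^bsub>group_ring n\<^esub> \<in> Units (group_ring n :: (nat \<Rightarrow> 'a) ring)"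
proof -
  obtain g :: 'a where g: "2 * g = 1" "g * 2 = 1"
    using local_ring_invertible[OF local local_ring_two_notin_jacobson[OF local char]] by metis
  define h where "h = (\<lambda>l. g * gr_one n l)"
  have h_closed: "h \<in> gr_carrier n" and two_closed: "(\<lambda>l. gr_one n l + gr_one n l) \<in> gr_carrier n"
    using n by (simp_all add: h_def gr_carrier_def gr_one_def)
  have two_left: "(\<lambda>l. gr_one n l + gr_one n l) = (\<lambda>l. 2 * gr_one n l)"
    and two_right: "(\<lambda>l. gr_one n l + gr_one n l) = (\<lambda>l. gr_one n l * 2)"
    by (auto simp: gr_one_def)
  have "gr_mult n h (\<lambda>l. gr_one n l + gr_one n l) = gr_one n"
    unfolding h_def two_right gr_mult_scale_left gr_mult_scale_right gr_mult_one_left[OF n gr_one_closed[OF n]]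
    by (rule ext) (simp add: gr_one_def mult.assoc[symmetric] g)
  moreover have h_right: "h = (\<lambda>l. gr_one n l * g)" by (auto simp: h_def gr_one_def)
  have "gr_mult n (\<lambda>l. gr_one n l + gr_one n l) h = gr_one n"
    unfolding two_left h_right gr_mult_scale_left gr_mult_scale_right gr_mult_one_left[OF n gr_one_closed[OF n]]
    by (rule ext) (simp add: gr_one_def mult.assoc g)
  ultimately show ?thesis
    using h_closed two_closed unfolding Units_def by auto
qed

lemma group_ring_sum_two_Units:
  fixes x :: "nat \<Rightarrow> 'a::ring_1"
  assumes n: "n > 0" and local: "local_ring TYPE('a)" and char: "char_rad_quot TYPE('a) \<noteq> 2"
    and x: "x \<in> gr_carrier n"
  shows "\<exists>u\<in>Units (group_ring n). \<exists>v\<in>Units (group_ring n). x = u \<oplus>\<^bsub>group_ring n\<^esub> v"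
proof -
  interpret G: ring "group_ring n :: (nat \<Rightarrow> 'a) ring" by (rule ring_group_ring[OF n])
  interpret I: ideal "gr_rad n" "group_ring n :: (nat \<Rightarrow> 'a) ring" by (rule ideal_gr_rad[OF n local])
  let ?Q = "group_ring n Quot gr_rad n :: (nat \<Rightarrow> 'a) set ring"
  let ?cl = "(+>\<^bsub>group_ring n :: (nat \<Rightarrow> 'a) ring\<^esub>) (gr_rad n)"
  interpret Q: ring ?Q by (rule I.quotient_is_ring)
  obtain j a where a: "a \<in> gr_carrier n"
    and "x [^]\<^bsub>group_ring n\<^esub> j \<ominus>\<^bsub>group_ring n\<^esub> a \<otimes>\<^bsub>group_ring n\<^esub> x [^]\<^bsub>group_ring n\<^esub> Suc j \<in> gr_rad n"
    by (rule gr_pow_left_regular_mod_gr_rad[OF n local x])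
  then have "?cl x [^]\<^bsub>?Q\<^esub> j = ?cl a \<otimes>\<^bsub>?Q\<^esub> ?cl x [^]\<^bsub>?Q\<^esub> Suc j"
    using x by (intro I.rcos_left_regular) simp_all
  then have left: "?cl x [^]\<^bsub>?Q\<^esub> (j + j') = ?cl a \<otimes>\<^bsub>?Q\<^esub> ?cl x [^]\<^bsub>?Q\<^esub> Suc (j + j')" for j'
    using x a by (intro Q.nat_pow_left_regular_add) (simp_all add: I.rcos_in_carrier)
  obtain j' b where b: "b \<in> gr_carrier n"
    and "x [^]\<^bsub>group_ring n\<^esub> j' \<ominus>\<^bsub>group_ring n\<^esub> x [^]\<^bsub>group_ring n\<^esub> Suc j' \<otimes>\<^bsub>group_ring n\<^esub> b \<in> gr_rad n"
    by (rule gr_pow_right_regular_mod_gr_rad[OF n local x])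
  then have "?cl x [^]\<^bsub>?Q\<^esub> j' = ?cl x [^]\<^bsub>?Q\<^esub> Suc j' \<otimes>\<^bsub>?Q\<^esub> ?cl b"
    using x by (intro I.rcos_right_regular) simp_all
  then have right: "?cl x [^]\<^bsub>?Q\<^esub> (j + j') = ?cl x [^]\<^bsub>?Q\<^esub> Suc (j + j') \<otimes>\<^bsub>?Q\<^esub> ?cl b"
    using x b by (intro Q.nat_pow_right_regular_add) (simp_all add: I.rcos_in_carrier)
  have "\<one>\<^bsub>?Q\<^esub> \<oplus>\<^bsub>?Q\<^esub> \<one>\<^bsub>?Q\<^esub> \<in> Units ?Q"
    using I.rcos_Units[OF one_add_one_Units_group_ring[OF n local char]] by (simp add: FactRing_def I.a_rcos_sum gr_one_closed[OF n])
  then obtain U V where "U \<in> Units ?Q" "V \<in> Units ?Q" "?cl x = U \<oplus>\<^bsub>?Q\<^esub> V"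
    using Q.sum_two_Units_if_strongly_pi_regular[OF _ _ _ left right] x a b
    by (auto simp: I.rcos_in_carrier)
  moreover have "x \<in> carrier (group_ring n)" using x by simp
  ultimately show ?thesis
    using I.sum_two_Units_lift[OF Units_group_ring_if_one_mod_gr_rad[OF n]] by blast
qed

theorem theorem10:
  fixes n :: nat
  assumes "n > 0"
    and "local_ring TYPE('a::ring_1)"
    and "char_rad_quot TYPE('a) \<noteq> 2"
  shows "gr_good n TYPE('a) 2"
  unfolding gr_good_def
proof
  fix x :: "nat \<Rightarrow> 'a" assume "x \<in> gr_carrier n"
  then obtain u v where "u \<in> Units (group_ring n)" "v \<in> Units (group_ring n)" "x = u \<oplus>\<^bsub>group_ring n\<^esub> v"
    using group_ring_sum_two_Units[OF assms] by blast
  then show "\<exists>w. (\<forall>i<2::nat. gr_unit n (w i)) \<and> x = (\<lambda>k. \<Sum>i<2::nat. w i k)"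
    by (intro exI[of _ "\<lambda>i. if i = 0 then u else v"]) (auto simp: gr_unit_iff_Units numeral_2_eq_2)
qed

end
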